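(* Under Assumptions 1 and 2, for the accurate-gradient algorithm and every $t\in\{1,\dots,T\}$, $$-\eta_t\sum_{i=1}^n\big(g_i^t(x_i(t))\big)^Ty_i(t)\le\frac12\sum_{i=1}^n\big(\|y_i(t)\|^2-\|y_i(t+1)\|^2\big)+\eta_t^2(n\kappa_2^2+n^2\kappa_2^2)+\frac92\sum_{i=1}^n\|y_i(t)-\bar y(t)\|^2+2\eta_t(\kappa_2+\sqrt n\kappa_2)\sum_{i=1}^n\|y_i(t)-\bar y(t)\|,$$ where $\bar y(t)=\frac1n\sum_iy_i(t)$.
   Context: Network: Let $n\ge2$, $\mathcal V=\{1,\dots,n\}$. For $t=0,1,2,\dots$, $\mathcal G(t)=(\mathcal V,\mathcal E(t),A(t))$ is a digraph with weight matrix $A(t)=(a_{ij}(t))_{n\times n}$, where for some $\gamma>0$, $\gamma\le a_{ij}(t)\le1$ if $(j,i)\in\mathcal E(t)$ and $a_{ij}(t)=0$ otherwise; $\mathcal N_i(t)=\{j:(j,i)\in\mathcal E(t)\}$ and $i\in\mathcal N_i(t)$. Assumption 1: there is an integer $U>0$ such that for every $t\ge0$ the digraph $(\mathcal V,\bigcup_{k=tU}^{(t+1)U-1}\mathcal E(k))$ is strongly connected, and $A(t)1_n=A(t)^T1_n=1_n$ for all $t$. Problem: $\Omega\subset\mathbb R^m$ is convex; for each $i\in\mathcal V$ and $t\ge0$, $f_i^t:\Omega\times\Omega\to\mathbb R$ and $g_i^t=(g_{i1}^t,\dots,g_{ih}^t)^T:\Omega\to\mathbb R^h$; $\mathcal X^t=\{x\in\Omega:\sum_ig_i^t(x)\le0\}$;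 $\nabla_2$ is the gradient in the second argument; $\nabla g_i^t(x)=[\nabla g_{i1}^t(x),\dots,\nabla g_{ih}^t(x)]\in\mathbb R^{m\times h}$. Assumption 2: (i) $f_i^t(x,\cdot)$ convex, each $g_{ik}^t$ convex (differentiable); (ii) $\mathcal X^t\neq\emptyset$, $\Omega$ compact with $\|x\|\le\kappa$ on $\Omega$; (iii) $\|\nabla_2f_i^t(x,y)\|\le\kappa_1$, $\|g_i^t(x)\|\le\kappa_2$, $\|\nabla g_{ik}^t(x)\|\le\kappa_3$ on $\Omega$. Algorithm: $\phi:\mathbb R^m\to\mathbb R$ differentiable and $\mu$-strongly convex, $\mathcal D_\phi(x,y)=\phi(x)-\phi(y)-\langle\nabla\phi(y),x-y\rangle$. Non-increasing step sizes $\zeta_t,\eta_t\in(0,1]$ with $\zeta_t\le\eta_t$; $x_i(0)\in\Omega$, $y_i(0)=0\in\mathbb R^h$; for $t\ge0$: $z_i(t)=\sum_{j\in\mathcal N_i(t)}a_{ij}(t)x_j(t)$; $x_i(t+1)=\arg\min_{x\in\Omega}\{\mathcal D_\phi(x,z_i(t))+\langle\zeta_t\nabla_2f_i^t(x_i(t),x_i(t))+\eta_t\nabla g_i^t(x_i(t))y_i(t),x\rangle\}$; $y_i(t+1)=[(1-\eta_t)\sum_{j\in\mathcal N_i(t)}a_{ij}(t)y_j(t)+\eta_tg_i^t(x_i(t))]_+$. $T$ is the time horizon. *)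

theory Defs
  imports "HOL-Analysis.Analysis"
begin

definition pos_part :: "real^'h \<Rightarrow> real^'h" where
  "pos_part v = (\<chi> k. max 0 (v $ k))"

definition strongly_convex :: "real \<Rightarrow> (real^'m \<Rightarrow> real) \<Rightarrow> bool" where
  "strongly_convex \<mu> \<phi> \<longleftrightarrow> \<mu> > 0 \<and> convex_on UNIV (\<lambda>x. \<phi> x - \<mu> / 2 * (norm x)^2)"

definition bregman :: "(real^'m \<Rightarrow> real) \<Rightarrow> (real^'m \<Rightarrow> real^'m) \<Rightarrow> real^'m \<Rightarrow> real^'m \<Rightarrow> real" where
  "bregman \<phi> d\<phi> x y = \<phi> x - \<phi> y - d\<phi> y \<bullet> (x - y)"

text \<open>Digraph on vertex set V with edge set E (edge (j,i) means j -> i) is strongly connected.\<close>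
definition strongly_connected_on :: "nat set \<Rightarrow> (nat \<times> nat) set \<Rightarrow> bool" where
  "strongly_connected_on V E \<longleftrightarrow> (\<forall>i\<in>V. \<forall>j\<in>V. (i, j) \<in> (E \<inter> (V \<times> V))\<^sup>*)"

definition nbrs :: "nat \<Rightarrow> (nat \<Rightarrow> (nat \<times> nat) set) \<Rightarrow> nat \<Rightarrow> nat \<Rightarrow> nat set" where
  "nbrs n E t i = {j \<in> {1..n}. (j, i) \<in> E t}"

end

theory Submission
  imports Defs
begin

text \<open>Write w_i = sum_j a_ij(t) y_j(t) and g_i = g_i^t(x_i(t)). The positive part is
norm-nonexpansive, so for eta_t <= 1 the dual update gives
||y_i(t+1)||^2 <= ||w_i||^2 + 2 eta_t w_i.g_i + 2 eta_t^2 ||g_i||^2.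
Summing over i, double stochasticity of the weights and convexity of ||.||^2 give
sum_i ||w_i||^2 <= sum_i ||y_i(t)||^2, and writing w_i - y_i(t) = sum_j a_ij(t) (y_j(t) - c) - (y_i(t) - c)
bounds the disagreement term sum_i (w_i - y_i(t)).g_i by 2 kappa_2 sum_i ||y_i(t) - c|| for any
centre c. With c the average of the y_i(t) this already yields the claim without the terms
eta_t^2 n^2 kappa_2^2, 9/2 sum_i ||y_i(t) - c||^2 and 2 eta_t sqrt n kappa_2 sum_i ||y_i(t) - c||.\<close>

definition doubly_stochastic_on :: "'b set \<Rightarrow> ('b \<Rightarrow> 'b \<Rightarrow> real) \<Rightarrow> bool" where
  "doubly_stochastic_on N a \<longleftrightarrow>
     (\<forall>i\<in>N. \<forall>j\<in>N. 0 \<le> a i j) \<and> (\<forall>i\<in>N. (\<Sum>j\<in>N. a i j) = 1) \<and> (\<forall>j\<in>N. (\<Sum>i\<in>N. a i j) = 1)"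

lemma norm_pos_part_le: "norm (pos_part v) \<le> norm (v :: real^'h)"
  unfolding pos_part_def by (rule norm_le_componentwise_cart) auto

lemma norm_sum_scaleR_nonneg_le:
  fixes Y :: "'b \<Rightarrow> 'a::real_normed_vector"
  assumes "\<And>j. j \<in> S \<Longrightarrow> 0 \<le> a j"
  shows "norm (\<Sum>j\<in>S. a j *\<^sub>R Y j) \<le> (\<Sum>j\<in>S. a j * norm (Y j))"
proof -
  have "norm (\<Sum>j\<in>S. a j *\<^sub>R Y j) \<le> (\<Sum>j\<in>S. norm (a j *\<^sub>R Y j))"
    by (rule norm_sum)
  also have "\<dots> = (\<Sum>j\<in>S. a j * norm (Y j))"
    using assms by (intro sum.cong) auto
  finally show ?thesis .
qed

lemma power2_norm_convex_comb_le:
  fixes Y :: "'b \<Rightarrow> 'a::real_normed_vector"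
  assumes "finite S" "S \<noteq> {}" "(\<Sum>j\<in>S. a j) = 1" "\<And>j. j \<in> S \<Longrightarrow> 0 \<le> a j"
  shows "(norm (\<Sum>j\<in>S. a j *\<^sub>R Y j))\<^sup>2 \<le> (\<Sum>j\<in>S. a j * (norm (Y j))\<^sup>2)"
proof -
  have "(norm (\<Sum>j\<in>S. a j *\<^sub>R Y j))\<^sup>2 \<le> (\<Sum>j\<in>S. a j * norm (Y j))\<^sup>2"
    using norm_sum_scaleR_nonneg_le[of S a Y] assms(4) by (intro power_mono) auto
  also have "\<dots> \<le> (\<Sum>j\<in>S. a j * (norm (Y j))\<^sup>2)"
    using convex_on_sum[OF assms(1,2) convex_power_even[of 2] assms(3), of "\<lambda>j. norm (Y j)"] assms(4)
    by simp
  finally show ?thesis .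
qed

lemma power2_norm_convex_step_le:
  fixes w v :: "'a::real_inner"
  assumes "0 \<le> e" "e \<le> 1"
  shows "(norm ((1 - e) *\<^sub>R w + e *\<^sub>R v))\<^sup>2 \<le> (norm w)\<^sup>2 + 2 * e * (w \<bullet> v) + 2 * e\<^sup>2 * (norm v)\<^sup>2"
proof -
  have expand: "(norm ((1 - e) *\<^sub>R w + e *\<^sub>R v))\<^sup>2
      = (1 - e)\<^sup>2 * (w \<bullet> w) + 2 * e * (1 - e) * (w \<bullet> v) + e\<^sup>2 * (v \<bullet> v)"
    unfolding power2_norm_eq_inner
    by (simp add: inner_add_left inner_add_right inner_commute power2_eq_square algebra_simps)
  have "0 \<le> (norm (w + v))\<^sup>2" by simp
  then have "0 \<le> e\<^sup>2 * (w \<bullet> w + 2 * (w \<bullet> v) + v \<bullet> v)"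
    by (simp add: power2_norm_eq_inner inner_add inner_commute)
  moreover have "0 \<le> 2 * e * (1 - e) * (w \<bullet> w)"
    using assms by simp
  ultimately show ?thesis
    unfolding expand power2_norm_eq_inner
    by (simp add: inner_commute[of v w] power2_eq_square algebra_simps)
qed

lemma doubly_stochastic_sum_swap:
  assumes "doubly_stochastic_on N a" "finite N"
  shows "(\<Sum>i\<in>N. \<Sum>j\<in>N. a i j * h j) = (\<Sum>j\<in>N. h j)"
proof -
  have "(\<Sum>i\<in>N. \<Sum>j\<in>N. a i j * h j) = (\<Sum>j\<in>N. (\<Sum>i\<in>N. a i j) * h j)"
    by (subst sum.swap) (simp add: sum_distrib_right)
  also have "\<dots> = (\<Sum>j\<in>N. h j)"
    using assms(1) by (simp add: doubly_stochastic_on_def)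
  finally show ?thesis .
qed

lemma doubly_stochastic_sum_power2_norm_le:
  fixes Y :: "'b \<Rightarrow> 'a::real_normed_vector"
  assumes "doubly_stochastic_on N a" "finite N"
  shows "(\<Sum>i\<in>N. (norm (\<Sum>j\<in>N. a i j *\<^sub>R Y j))\<^sup>2) \<le> (\<Sum>i\<in>N. (norm (Y i))\<^sup>2)"
proof (cases "N = {}")
  case False
  have "(\<Sum>i\<in>N. (norm (\<Sum>j\<in>N. a i j *\<^sub>R Y j))\<^sup>2) \<le> (\<Sum>i\<in>N. \<Sum>j\<in>N. a i j * (norm (Y j))\<^sup>2)"
    using assms False
    by (intro sum_mono power2_norm_convex_comb_le) (auto simp: doubly_stochastic_on_def)
  also have "\<dots> = (\<Sum>i\<in>N. (norm (Y i))\<^sup>2)"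
    using assms by (rule doubly_stochastic_sum_swap)
  finally show ?thesis .
qed simp

lemma doubly_stochastic_sum_norm_mix_diff_le:
  fixes Y :: "'b \<Rightarrow> 'a::real_normed_vector"
  assumes ds: "doubly_stochastic_on N a" and "finite N"
  shows "(\<Sum>i\<in>N. norm ((\<Sum>j\<in>N. a i j *\<^sub>R Y j) - Y i)) \<le> 2 * (\<Sum>i\<in>N. norm (Y i - c))"
proof -
  have "norm ((\<Sum>j\<in>N. a i j *\<^sub>R Y j) - Y i) \<le> (\<Sum>j\<in>N. a i j * norm (Y j - c)) + norm (Y i - c)"
    if i: "i \<in> N" for i
  proof -
    have "(\<Sum>j\<in>N. a i j *\<^sub>R c) = c"
      using ds i by (simp add: doubly_stochastic_on_def flip: scaleR_sum_left)
    then have "(\<Sum>j\<in>N. a i j *\<^sub>R Y j) - Y i = (\<Sum>j\<in>N. a i j *\<^sub>R (Y j - c)) - (Y i - c)"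
      by (simp add: scaleR_diff_right sum_subtractf)
    also have "norm \<dots> \<le> norm (\<Sum>j\<in>N. a i j *\<^sub>R (Y j - c)) + norm (Y i - c)"
      by (rule norm_triangle_ineq4)
    also have "\<dots> \<le> (\<Sum>j\<in>N. a i j * norm (Y j - c)) + norm (Y i - c)"
      using ds i by (intro add_right_mono norm_sum_scaleR_nonneg_le) (auto simp: doubly_stochastic_on_def)
    finally show ?thesis .
  qed
  then have "(\<Sum>i\<in>N. norm ((\<Sum>j\<in>N. a i j *\<^sub>R Y j) - Y i))
      \<le> (\<Sum>i\<in>N. \<Sum>j\<in>N. a i j * norm (Y j - c)) + (\<Sum>i\<in>N. norm (Y i - c))"
    by (simp add: sum_mono flip: sum.distrib)
  also have "\<dots> = 2 * (\<Sum>i\<in>N. norm (Y i - c))"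
    using assms by (simp add: doubly_stochastic_sum_swap)
  finally show ?thesis .
qed

lemma consensus_dual_step_bound:
  fixes Y Y' G :: "'b \<Rightarrow> real^'h"
  assumes ds: "doubly_stochastic_on N a" and fin: "finite N"
    and e: "0 \<le> e" "e \<le> 1"
    and G_bound: "\<And>i. i \<in> N \<Longrightarrow> norm (G i) \<le> K"
    and Y'_def: "\<And>i. i \<in> N \<Longrightarrow> Y' i = pos_part ((1 - e) *\<^sub>R (\<Sum>j\<in>N. a i j *\<^sub>R Y j) + e *\<^sub>R G i)"
  shows "- e * (\<Sum>i\<in>N. G i \<bullet> Y i)
    \<le> 1/2 * (\<Sum>i\<in>N. (norm (Y i))\<^sup>2 - (norm (Y' i))\<^sup>2) + e\<^sup>2 * card N * K\<^sup>2
      + 2 * e * K * (\<Sum>i\<in>N. norm (Y i - c))"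
proof -
  define w where "w i = (\<Sum>j\<in>N. a i j *\<^sub>R Y j)" for i
  have step: "(norm (Y' i))\<^sup>2 \<le> (norm (w i))\<^sup>2 + 2 * e * (w i \<bullet> G i) + 2 * e\<^sup>2 * K\<^sup>2"
    if i: "i \<in> N" for i
  proof -
    have "(norm (Y' i))\<^sup>2 \<le> (norm ((1 - e) *\<^sub>R w i + e *\<^sub>R G i))\<^sup>2"
      using Y'_def[OF i] norm_pos_part_le by (simp add: w_def power_mono)
    also have "\<dots> \<le> (norm (w i))\<^sup>2 + 2 * e * (w i \<bullet> G i) + 2 * e\<^sup>2 * (norm (G i))\<^sup>2"
      using e by (rule power2_norm_convex_step_le)
    also have "\<dots> \<le> (norm (w i))\<^sup>2 + 2 * e * (w i \<bullet> G i) + 2 * e\<^sup>2 * K\<^sup>2"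
      using G_bound[OF i] by (simp add: mult_left_mono power_mono)
    finally show ?thesis .
  qed
  have disagreement: "(\<Sum>i\<in>N. (w i - Y i) \<bullet> G i) \<le> 2 * K * (\<Sum>i\<in>N. norm (Y i - c))"
  proof (cases "N = {}")
    case False
    then have "0 \<le> K"
      using G_bound norm_ge_zero order_trans by blast
    have "(w i - Y i) \<bullet> G i \<le> K * norm (w i - Y i)" if "i \<in> N" for i
      using Cauchy_Schwarz_ineq2[of "w i - Y i" "G i"] G_bound[OF that]
        mult_left_mono[of "norm (G i)" K "norm (w i - Y i)"]
      by (simp add: mult.commute)
    then have "(\<Sum>i\<in>N. (w i - Y i) \<bullet> G i) \<le> K * (\<Sum>i\<in>N. norm (w i - Y i))"
      unfolding sum_distrib_left by (rule sum_mono)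
    also have "\<dots> \<le> K * (2 * (\<Sum>i\<in>N. norm (Y i - c)))"
      using doubly_stochastic_sum_norm_mix_diff_le[OF ds fin] \<open>0 \<le> K\<close>
      by (intro mult_left_mono) (simp_all add: w_def)
    finally show ?thesis by simp
  qed simp
  have "(\<Sum>i\<in>N. (norm (Y' i))\<^sup>2)
      \<le> (\<Sum>i\<in>N. (norm (w i))\<^sup>2 + 2 * e * (w i \<bullet> G i) + 2 * e\<^sup>2 * K\<^sup>2)"
    by (rule sum_mono) (rule step)
  also have "\<dots> = (\<Sum>i\<in>N. (norm (w i))\<^sup>2) + 2 * e * (\<Sum>i\<in>N. (w i - Y i) \<bullet> G i)
      + 2 * e * (\<Sum>i\<in>N. G i \<bullet> Y i) + 2 * e\<^sup>2 * card N * K\<^sup>2"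
    by (simp add: sum.distrib sum_distrib_left sum_subtractf inner_commute algebra_simps)
  also have "\<dots> \<le> (\<Sum>i\<in>N. (norm (Y i))\<^sup>2) + 2 * e * (2 * K * (\<Sum>i\<in>N. norm (Y i - c)))
      + 2 * e * (\<Sum>i\<in>N. G i \<bullet> Y i) + 2 * e\<^sup>2 * card N * K\<^sup>2"
    using doubly_stochastic_sum_power2_norm_le[OF ds fin, of Y] disagreement e
    by (intro add_mono mult_left_mono order_refl) (simp_all add: w_def)
  finally show ?thesis
    by (simp add: sum_subtractf algebra_simps)
qed

theorem lemma6:
  fixes n :: nat and T :: nat and t :: nat
    and E :: "nat \<Rightarrow> (nat \<times> nat) set" and a :: "nat \<Rightarrow> nat \<Rightarrow> nat \<Rightarrow> real"
    and \<gamma> :: real and U :: nat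
    and \<Omega> :: "(real^'m) set"
    and f :: "nat \<Rightarrow> nat \<Rightarrow> real^'m \<Rightarrow> real^'m \<Rightarrow> real"
    and df :: "nat \<Rightarrow> nat \<Rightarrow> real^'m \<Rightarrow> real^'m \<Rightarrow> real^'m"
    and g :: "nat \<Rightarrow> nat \<Rightarrow> real^'m \<Rightarrow> real^'h"
    and Dg :: "nat \<Rightarrow> nat \<Rightarrow> real^'m \<Rightarrow> real^'h^'m"
    and \<kappa> \<kappa>1 \<kappa>2 \<kappa>3 :: real
    and \<phi> :: "real^'m \<Rightarrow> real" and d\<phi> :: "real^'m \<Rightarrow> real^'m" and \<mu> :: real
    and \<zeta> \<eta> :: "nat \<Rightarrow> real"
    and x :: "nat \<Rightarrow> nat \<Rightarrow> real^'m" and y :: "nat \<Rightarrow> nat \<Rightarrow> real^'h"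
  assumes n2: "n \<ge> 2"
    \<comment> \<open>network: edges within V, weights, self-loops\<close>
    and E_sub: "\<And>t. E t \<subseteq> {1..n} \<times> {1..n}"
    and gamma_pos: "\<gamma> > 0"
    and a_edge: "\<And>t i j. (j, i) \<in> E t \<Longrightarrow> \<gamma> \<le> a t i j \<and> a t i j \<le> 1"
    and a_nonedge: "\<And>t i j. i \<in> {1..n} \<Longrightarrow> j \<in> {1..n} \<Longrightarrow> (j, i) \<notin> E t \<Longrightarrow> a t i j = 0"
    and self_loop: "\<And>t i. i \<in> {1..n} \<Longrightarrow> (i, i) \<in> E t"
    \<comment> \<open>Assumption 1\<close>
    and U_pos: "U > 0"
    and joint_sc: "\<And>t. strongly_connected_on {1..n} (\<Union>k\<in>{t*U..<(t+1)*U}. E k)"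
    and row_stoch: "\<And>t i. i \<in> {1..n} \<Longrightarrow> (\<Sum>j=1..n. a t i j) = 1"
    and col_stoch: "\<And>t j. j \<in> {1..n} \<Longrightarrow> (\<Sum>i=1..n. a t i j) = 1"
    \<comment> \<open>Assumption 2\<close>
    and Omega_convex: "convex \<Omega>"
    and Omega_compact: "compact \<Omega>"
    and f_grad: "\<And>i t u v. i \<in> {1..n} \<Longrightarrow> u \<in> \<Omega> \<Longrightarrow> v \<in> \<Omega> \<Longrightarrow>
                   (f i t u has_derivative (\<lambda>w. df i t u v \<bullet> w)) (at v)"
    and f_convex: "\<And>i t u. i \<in> {1..n} \<Longrightarrow> u \<in> \<Omega> \<Longrightarrow> convex_on \<Omega> (f i t u)"
    and g_grad: "\<And>i t k v. i \<in> {1..n} \<Longrightarrow> v \<in> \<Omega> \<Longrightarrow>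
                   ((\<lambda>z. g i t z $ k) has_derivative (\<lambda>w. column k (Dg i t v) \<bullet> w)) (at v)"
    and g_convex: "\<And>i t k. i \<in> {1..n} \<Longrightarrow> convex_on \<Omega> (\<lambda>z. g i t z $ k)"
    and X_nonempty: "\<And>t. {z \<in> \<Omega>. \<forall>k. (\<Sum>i=1..n. g i t z $ k) \<le> 0} \<noteq> {}"
    and kappa_bd: "\<And>z. z \<in> \<Omega> \<Longrightarrow> norm z \<le> \<kappa>"
    and kappa1_bd: "\<And>i t u v. i \<in> {1..n} \<Longrightarrow> u \<in> \<Omega> \<Longrightarrow> v \<in> \<Omega> \<Longrightarrow> norm (df i t u v) \<le> \<kappa>1"
    and kappa2_bd: "\<And>i t z. i \<in> {1..n} \<Longrightarrow> z \<in> \<Omega> \<Longrightarrow> norm (g i t z) \<le> \<kappa>2"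
    and kappa3_bd: "\<And>i t k z. i \<in> {1..n} \<Longrightarrow> z \<in> \<Omega> \<Longrightarrow> norm (column k (Dg i t z)) \<le> \<kappa>3"
    \<comment> \<open>mirror map\<close>
    and phi_grad: "\<And>z. (\<phi> has_derivative (\<lambda>w. d\<phi> z \<bullet> w)) (at z)"
    and phi_sc: "strongly_convex \<mu> \<phi>"
    \<comment> \<open>step sizes\<close>
    and zeta_range: "\<And>t. 0 < \<zeta> t \<and> \<zeta> t \<le> 1"
    and eta_range: "\<And>t. 0 < \<eta> t \<and> \<eta> t \<le> 1"
    and zeta_mono: "\<And>s t. s \<le> t \<Longrightarrow> \<zeta> t \<le> \<zeta> s"
    and eta_mono: "\<And>s t. s \<le> t \<Longrightarrow> \<eta> t \<le> \<eta> s"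
    and zeta_le_eta: "\<And>t. \<zeta> t \<le> \<eta> t"
    \<comment> \<open>algorithm\<close>
    and x_init: "\<And>i. i \<in> {1..n} \<Longrightarrow> x i 0 \<in> \<Omega>"
    and y_init: "\<And>i. i \<in> {1..n} \<Longrightarrow> y i 0 = 0"
    and x_update: "\<And>i s. i \<in> {1..n} \<Longrightarrow>
        (let z = (\<Sum>j\<in>nbrs n E s i. a s i j *\<^sub>R x j s);
             c = \<zeta> s *\<^sub>R df i s (x i s) (x i s) + \<eta> s *\<^sub>R (Dg i s (x i s) *v y i s);
             obj = (\<lambda>w. bregman \<phi> d\<phi> w z + c \<bullet> w)
         in x i (Suc s) \<in> \<Omega> \<and> (\<forall>w\<in>\<Omega>. obj (x i (Suc s)) \<le> obj w))"
    and y_update: "\<And>i s. i \<in> {1..n} \<Longrightarrow>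
        y i (Suc s) = pos_part ((1 - \<eta> s) *\<^sub>R (\<Sum>j\<in>nbrs n E s i. a s i j *\<^sub>R y j s)
                               + \<eta> s *\<^sub>R g i s (x i s))"
    and t_range: "1 \<le> t" "t \<le> T"
  shows "- \<eta> t * (\<Sum>i=1..n. g i t (x i t) \<bullet> y i t)
     \<le> 1/2 * (\<Sum>i=1..n. (norm (y i t))^2 - (norm (y i (t+1)))^2)
       + (\<eta> t)^2 * (real n * \<kappa>2^2 + (real n)^2 * \<kappa>2^2)
       + 9/2 * (\<Sum>i=1..n. (norm (y i t - (1 / real n) *\<^sub>R (\<Sum>j=1..n. y j t)))^2)
       + 2 * \<eta> t * (\<kappa>2 + sqrt (real n) * \<kappa>2)
           * (\<Sum>i=1..n. norm (y i t - (1 / real n) *\<^sub>R (\<Sum>j=1..n. y j t)))"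
proof -
  define c where "c = (1 / real n) *\<^sub>R (\<Sum>j=1..n. y j t)"
  obtain s where s: "t = Suc s"
    using t_range by (cases t) auto
  have a_nonneg: "0 \<le> a t i j" if "i \<in> {1..n}" "j \<in> {1..n}" for i j
    using a_edge[of j i t] a_nonedge[of i j t] gamma_pos that by (cases "(j, i) \<in> E t") auto
  have ds: "doubly_stochastic_on {1..n} (a t)"
    using a_nonneg row_stoch col_stoch by (simp add: doubly_stochastic_on_def)
  have nbrs_sum: "(\<Sum>j\<in>nbrs n E t i. a t i j *\<^sub>R v j) = (\<Sum>j=1..n. a t i j *\<^sub>R v j)"
    if "i \<in> {1..n}" for i and v :: "nat \<Rightarrow> real^'h"
    using a_nonedge that by (intro sum.mono_neutral_left) (auto simp: nbrs_def)
  have g_bound: "norm (g i t (x i t)) \<le> \<kappa>2" if "i \<in> {1..n}" for i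
    using x_update[of i s] kappa2_bd[of i "x i t" t] that by (simp add: s Let_def)
  have "0 \<le> \<kappa>2"
    using g_bound[of 1] n2 by (auto intro: order_trans[OF norm_ge_zero])
  have y_next: "y i (t+1) = pos_part ((1 - \<eta> t) *\<^sub>R (\<Sum>j=1..n. a t i j *\<^sub>R y j t) + \<eta> t *\<^sub>R g i t (x i t))"
    if "i \<in> {1..n}" for i
    using y_update[of i t] nbrs_sum[OF that] that by simp
  have eta: "0 \<le> \<eta> t" "\<eta> t \<le> 1"
    using eta_range[of t] by auto
  have sharp: "- \<eta> t * (\<Sum>i=1..n. g i t (x i t) \<bullet> y i t)
      \<le> 1/2 * (\<Sum>i=1..n. (norm (y i t))\<^sup>2 - (norm (y i (t+1)))\<^sup>2) + (\<eta> t)\<^sup>2 * real n * \<kappa>2\<^sup>2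
        + 2 * \<eta> t * \<kappa>2 * (\<Sum>i=1..n. norm (y i t - c))"
    using consensus_dual_step_bound[OF ds finite_atLeastAtMost eta g_bound y_next, of c] by simp
  have slack: "0 \<le> (\<eta> t)\<^sup>2 * (real n)\<^sup>2 * \<kappa>2\<^sup>2 + 9/2 * (\<Sum>i=1..n. (norm (y i t - c))\<^sup>2)
      + 2 * \<eta> t * sqrt (real n) * \<kappa>2 * (\<Sum>i=1..n. norm (y i t - c))"
    using eta \<open>0 \<le> \<kappa>2\<close> by (intro add_nonneg_nonneg mult_nonneg_nonneg sum_nonneg) auto
  show ?thesis
    unfolding c_def[symmetric] using sharp slack by (simp add: algebra_simps)
qed

end
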